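(* Let $\varphi=\frac{1+\sqrt5}{2}$ and $\theta_0=(\theta_1,\theta_2,\theta_3)=\left(\frac12,\frac1\varphi,\frac1{\varphi^2}\right)$. Let $m=(0,y,z)$ be a point of the face $X=0$ of the unit cube with well defined orbit, identified with $(y,z)\in\mathbb T^2=(\mathbb R/\mathbb Z)^2$. Then for every $k\ge 0$, the $(k+1)$-th return word of $a$ in the billiard word $u=f_{\theta_0}(m)$ is $\Phi\big(m+2k\theta_2(1,-1)\bmod 1\big)$.
   Context: $f_{\theta_0}(m)\in\{a,b,c\}^{\mathbb N}$ records, in order, the successive intersections of the half line $m+\mathbb R_+\theta_0$ with the planes $X=n$ (letter $a$), $Y=n$ (letter $b$), $Z=n$ (letter $c$), $n\in\mathbb Z$; for $m$ on the face $X=0$ it begins with $a$. The $j$-th return word of $a$ in $u$ is the factor of $u$ starting at the $j$-th occurrence of $a$ and ending just before the $(j+1)$-th occurrence of $a$. The face $X=0$ (identified with $\mathbb T^2$ via $(y,z)$) is partitioned, up to boundaries, into seven sets, for $(y,z)\in[0,1)^2$: $P_{a_7}$: $y<4-2\varphi,\ z<2\varphi-3$; $P_{a_4}$: $y>4-2\varphi,\ z<2\varphi-3$; $P_{a_2}$: $y<4-2\varphi,\ 2\varphi-3<z<(2-\varphi)+y/\varphi$; $P_{a_1}$: $y<4-2\varphi,\ z>(2-\varphi)+y/\varphi$; $P_{a_5}$: $y>4-2\varphi,\ 2\varphi-3<z<(3-2\varphi)+y/\varphi$; $P_{a_3}$: $y>4-2\varphi,\ (3-2\varphi)+y/\varphi<z<(2-\varphi)+y/\varphi$;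 $P_{a_6}$: $y>4-2\varphi,\ z>(2-\varphi)+y/\varphi$. For a point $q$ of the face, $\Phi(q):=\Phi(a_i)$ where $q\in P_{a_i}$, with $\Phi(a_1)=acb$, $\Phi(a_2)=abc$, $\Phi(a_3)=abcb$, $\Phi(a_4)=abb$, $\Phi(a_5)=abbc$, $\Phi(a_6)=acbb$, $\Phi(a_7)=ab$ (this is the first return word of $a$ in $f_{\theta_0}(q)$). *)

theory Defs
  imports Complex_Main
begin

datatype letter = a | b | c

definition phi :: real where "phi = (1 + sqrt 5) / 2"

definition theta1 :: real where "theta1 = 1 / 2"
definition theta2 :: real where "theta2 = 1 / phi"
definition theta3 :: real where "theta3 = 1 / phi ^ 2"

definition theta0 :: "real \<times> real \<times> real" where
  "theta0 = (theta1, theta2, theta3)"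

definition coordX :: "real \<times> real \<times> real \<Rightarrow> real \<times> real \<times> real \<Rightarrow> real \<Rightarrow> real" where
  "coordX \<theta> m t = fst m + t * fst \<theta>"
definition coordY :: "real \<times> real \<times> real \<Rightarrow> real \<times> real \<times> real \<Rightarrow> real \<Rightarrow> real" where
  "coordY \<theta> m t = fst (snd m) + t * fst (snd \<theta>)"
definition coordZ :: "real \<times> real \<times> real \<Rightarrow> real \<times> real \<times> real \<Rightarrow> real \<Rightarrow> real" where
  "coordZ \<theta> m t = snd (snd m) + t * snd (snd \<theta>)"

definition hit_times :: "real \<times> real \<times> real \<Rightarrow> real \<times> real \<times> real \<Rightarrow> real set" where
  "hit_times \<theta> m = {t. 0 \<le> t \<and> (coordX \<theta> m t \<in> \<int> \<or> coordY \<theta> m t \<in> \<int> \<or> coordZ \<theta> m t \<in> \<int>)}"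

definition well_defined_orbit :: "real \<times> real \<times> real \<Rightarrow> real \<times> real \<times> real \<Rightarrow> bool" where
  "well_defined_orbit \<theta> m \<longleftrightarrow>
     (\<forall>t\<ge>0. \<not> (coordX \<theta> m t \<in> \<int> \<and> coordY \<theta> m t \<in> \<int>) \<and>
             \<not> (coordX \<theta> m t \<in> \<int> \<and> coordZ \<theta> m t \<in> \<int>) \<and>
             \<not> (coordY \<theta> m t \<in> \<int> \<and> coordZ \<theta> m t \<in> \<int>))"

definition nth_hit :: "real \<times> real \<times> real \<Rightarrow> real \<times> real \<times> real \<Rightarrow> nat \<Rightarrow> real" where
  "nth_hit \<theta> m n = (THE t. t \<in> hit_times \<theta> m \<and> card {s \<in> hit_times \<theta> m. s < t} = n)"

definition letter_at :: "real \<times> real \<times> real \<Rightarrow> real \<times> real \<times> real \<Rightarrow> real \<Rightarrow> letter" where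
  "letter_at \<theta> m t = (if coordX \<theta> m t \<in> \<int> then a else if coordY \<theta> m t \<in> \<int> then b else c)"

definition billiard_word :: "real \<times> real \<times> real \<Rightarrow> real \<times> real \<times> real \<Rightarrow> nat \<Rightarrow> letter" where
  "billiard_word \<theta> m n = letter_at \<theta> m (nth_hit \<theta> m n)"

text \<open>Position of the (j+1)-th occurrence (0-indexed j) of letter x in u.\<close>
definition occ :: "(nat \<Rightarrow> letter) \<Rightarrow> letter \<Rightarrow> nat \<Rightarrow> nat" where
  "occ u x j = (THE p. u p = x \<and> card {q. q < p \<and> u q = x} = j)"

text \<open>The j-th return word (j \<ge> 1) of x in u: factor from the j-th occurrence of x
  up to (excluding) the (j+1)-th occurrence.\<close>
definition return_word :: "(nat \<Rightarrow> letter) \<Rightarrow> letter \<Rightarrow> nat \<Rightarrow> letter list" where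
  "return_word u x j = map u [occ u x (j - 1) ..< occ u x j]"

text \<open>The map Phi on the face X = 0, (y,z) \<in> [0,1)^2, via the partition P_{a_1},...,P_{a_7}
  (defined up to boundaries; on boundaries an arbitrary value [] is used).\<close>
definition Phi :: "real \<Rightarrow> real \<Rightarrow> letter list" where
  "Phi y z =
    (if y < 4 - 2*phi \<and> z < 2*phi - 3 then [a,b]
     else if y > 4 - 2*phi \<and> z < 2*phi - 3 then [a,b,b]
     else if y < 4 - 2*phi \<and> 2*phi - 3 < z \<and> z < (2 - phi) + y/phi then [a,b,c]
     else if y < 4 - 2*phi \<and> z > (2 - phi) + y/phi then [a,c,b]
     else if y > 4 - 2*phi \<and> 2*phi - 3 < z \<and> z < (3 - 2*phi) + y/phi then [a,b,b,c]
     else if y > 4 - 2*phi \<and> (3 - 2*phi) + y/phi < z \<and> z < (2 - phi) + y/phi then [a,b,c,b]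
     else if y > 4 - 2*phi \<and> z > (2 - phi) + y/phi then [a,c,b,b]
     else [])"

end

theory Submission
  imports Defs
begin

(* The letter a is read exactly at the times 2j, when the half line crosses X = j. At time 2k the
   orbit point is congruent modulo Z^3 to m_k = (0, y_k, z_k) with y_k = frac (y + 2k theta2) and
   z_k = frac (z - 2k theta2), because theta2 + theta3 = 1; so the (k+1)-th return word of a is the
   word read along the orbit of m_k during the time window [0, 2). In that window the half line
   crosses X = n only at time 0, Y = n at (1 - y_k) phi and possibly (2 - y_k) phi, and Z = n
   possibly at (1 - z_k) phi^2. The return word lists these crossings in time order, and comparing
   the three times with each other and with 2 cuts the face into exactly the seven pieces P_{a_i}. *)

lemma phi_bounds: "3/2 < phi" "phi < 2"
proof -
  have "2 < sqrt (5::real)" by (rule real_less_rsqrt) simp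
  moreover have "sqrt (5::real) < 3" by (rule real_less_lsqrt) auto
  ultimately show "3/2 < phi" "phi < 2" unfolding phi_def by auto
qed

lemma phi_squared: "phi^2 = phi + 1"
  unfolding phi_def by (simp add: field_simps power2_eq_square)

lemma inverse_phi: "1 / phi = phi - 1"
  using phi_squared phi_bounds by (simp add: field_simps power2_eq_square)

lemma theta2_plus_theta3: "theta2 + theta3 = 1"
proof -
  have "0 < phi" using phi_bounds by simp
  then show ?thesis
    unfolding theta2_def theta3_def phi_def by (simp add: field_simps power2_eq_square)
qed

lemma Ints_add_left_iff: "d \<in> \<int> \<Longrightarrow> d + x \<in> \<int> \<longleftrightarrow> x \<in> (\<int> :: 'a :: ring_1 set)"
  by (metis Ints_add Ints_diff add_diff_cancel_left')

lemma Ints_nonneg_less_one: "(x :: real) \<in> \<int> \<Longrightarrow> 0 \<le> x \<Longrightarrow> x < 1 \<Longrightarrow> x = 0"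
  by (metis frac_eq_0_iff frac_eq)

lemma finite_crossing_times:
  fixes x c T :: real
  assumes "c \<noteq> 0"
  shows "finite {t. 0 \<le> t \<and> t < T \<and> x + t * c \<in> \<int>}"
proof (rule finite_imageD)
  let ?f = "\<lambda>t. x + t * c"
  show "inj_on ?f {t. 0 \<le> t \<and> t < T \<and> x + t * c \<in> \<int>}"
    using assms by (auto intro: inj_onI)
  have "\<bar>x + t * c\<bar> \<le> \<bar>x\<bar> + T * \<bar>c\<bar>" if "0 \<le> t" "t < T" for t
    using that by (auto simp: abs_mult intro!: order.trans[OF abs_triangle_ineq] mult_right_mono)
  then have "?f ` {t. 0 \<le> t \<and> t < T \<and> x + t * c \<in> \<int>} \<subseteq> {k \<in> \<int>. \<bar>k\<bar> \<le> \<bar>x\<bar> + T * \<bar>c\<bar>}"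
    by auto
  then show "finite (?f ` {t. 0 \<le> t \<and> t < T \<and> x + t * c \<in> \<int>})"
    using finite_abs_int_segment by (rule finite_subset)
qed

lemma crossing_time_bounded:
  fixes x t p :: real and N :: nat
  assumes "0 \<le> x" "x < 1" "0 < p" "0 \<le> t" "t < N * p" "x + t / p \<in> \<int>"
  shows "t = 0 \<or> (\<exists>n::nat. 0 < n \<and> n \<le> N \<and> t = (n - x) * p)"
proof -
  obtain n :: int where n: "x + t / p = n" using assms(6) by (auto elim: Ints_cases)
  then have t: "t = (n - x) * p" using assms(3) by (simp add: field_simps)
  have "0 \<le> n - x" using t assms(3,4) by (simp add: zero_le_mult_iff)
  moreover have "n - x < N" using t assms(3,5) by simp
  ultimately have "0 \<le> n" "n \<le> N" using assms(1,2) by linarith+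
  show ?thesis
  proof (cases "n = 0")
    case True
    then show ?thesis using t assms(1,3,4) by (simp add: mult_le_0_iff)
  next
    case False
    then have "0 < nat n" "nat n \<le> N" "t = (real (nat n) - x) * p"
      using \<open>0 \<le> n\<close> \<open>n \<le> N\<close> t by auto
    then show ?thesis by blast
  qed
qed

section \<open>Enumerating a discrete set of times\<close>

lemma set_take_sorted_wrt_less:
  fixes ts :: "'a :: linorder list"
  assumes sorted: "sorted_wrt (<) ts" and i: "i < length ts"
  shows "set (take i ts) = {s \<in> set ts. s < ts ! i}"
proof -
  have less_iff: "ts ! j < ts ! i \<longleftrightarrow> j < i" if j: "j < length ts" for j
  proof
    show "j < i \<Longrightarrow> ts ! j < ts ! i" using sorted_wrt_nth_less[OF sorted _ i] by blast
    show "j < i" if "ts ! j < ts ! i"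
    proof (rule ccontr)
      assume "\<not> j < i"
      then have "ts ! i \<le> ts ! j"
        using sorted_wrt_nth_less[OF sorted _ j, of i] by (cases "i = j") auto
      with that show False by simp
    qed
  qed
  have "set (take i ts) = (!) ts ` {0..<i}"
    using i by (simp add: nth_image)
  also have "\<dots> = {s \<in> set ts. s < ts ! i}"
  proof (intro equalityI subsetI)
    fix s assume "s \<in> (!) ts ` {0..<i}"
    then obtain j where "j < i" "s = ts ! j" by auto
    then show "s \<in> {s \<in> set ts. s < ts ! i}" using i less_iff[of j] by simp
  next
    fix s assume "s \<in> {s \<in> set ts. s < ts ! i}"
    then obtain j where "j < length ts" "s = ts ! j" "ts ! j < ts ! i" by (auto simp: in_set_conv_nth)
    then show "s \<in> (!) ts ` {0..<i}" using less_iff by auto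
  qed
  finally show ?thesis .
qed

locale discrete_time_set =
  fixes H :: "real set"
  assumes finite_below: "finite {s \<in> H. s < T}"
    and unbounded_above: "\<exists>s \<in> H. T < s"
begin

definition rank :: "real \<Rightarrow> nat" where
  "rank t = card {s \<in> H. s < t}"

lemma rank_less: "t \<in> H \<Longrightarrow> t < t' \<Longrightarrow> rank t < rank t'"
  unfolding rank_def by (intro psubset_card_mono finite_below) auto

lemma inj_on_rank: "inj_on rank H"
proof (rule inj_onI)
  fix s t assume "s \<in> H" "t \<in> H" "rank s = rank t"
  then show "s = t"
    using rank_less[of s t] rank_less[of t s] by (cases s t rule: linorder_cases) auto
qed

lemma exists_least:
  assumes "s0 \<in> H" "P s0"
  obtains t where "t \<in> H" "P t" "\<And>s. s \<in> H \<Longrightarrow> P s \<Longrightarrow> t \<le> s"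
proof -
  let ?S = "{s \<in> H. P s \<and> s \<le> s0}"
  have "finite ?S"
    using finite_below[of "s0 + 1"] by (rule finite_subset[rotated]) auto
  moreover have "s0 \<in> ?S" using assms by simp
  ultimately have min: "Min ?S \<in> ?S" "\<And>s. s \<in> ?S \<Longrightarrow> Min ?S \<le> s"
    using Min_in[of ?S] Min_le[of ?S] by auto
  have "Min ?S \<le> s" if "s \<in> H" "P s" for s
  proof (cases "s \<le> s0")
    case False
    then show ?thesis using min(1) by simp
  qed (use min(2) that in simp)
  with min(1) show thesis by (intro that) blast+
qed

lemma rank_surj: "\<exists>t \<in> H. rank t = n"
proof (induction n)
  case 0
  obtain s0 where "s0 \<in> H" using unbounded_above by blast
  then obtain t where t: "t \<in> H" "\<And>s. s \<in> H \<Longrightarrow> t \<le> s"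
    by (rule exists_least[where P = "\<lambda>_. True"]) simp_all
  then have "{s \<in> H. s < t} = {}" using leD by blast
  then have "rank t = 0" unfolding rank_def by (metis card.empty)
  with t(1) show ?case by blast
next
  case (Suc n)
  then obtain t where t: "t \<in> H" "rank t = n" by blast
  obtain s0 where "s0 \<in> H" "t < s0" using unbounded_above by blast
  then obtain t' where t': "t' \<in> H" "t < t'" "\<And>s. s \<in> H \<Longrightarrow> t < s \<Longrightarrow> t' \<le> s"
    by (rule exists_least[where P = "\<lambda>s. t < s"]) blast+
  have "{s \<in> H. s < t'} = insert t {s \<in> H. s < t}"
  proof (intro equalityI subsetI)
    fix s assume "s \<in> {s \<in> H. s < t'}"
    then have "s \<in> H" "\<not> t < s" using t'(3) leD by auto
    then show "s \<in> insert t {s \<in> H. s < t}" by auto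
  qed (use t(1) t'(2) in auto)
  then have "rank t' = Suc (rank t)"
    unfolding rank_def using finite_below[of t] by simp
  with t' t show ?case by auto
qed

lemma the_rank_eq: "t \<in> H \<Longrightarrow> (THE s. s \<in> H \<and> rank s = rank t) = t"
  using inj_on_rank by (intro the_equality) (auto simp: inj_on_eq_iff)

lemma rank_add_card:
  assumes "A \<le> t"
  shows "rank t = rank A + card {s \<in> H. A \<le> s \<and> s < t}"
proof -
  have "{s \<in> H. s < t} = {s \<in> H. s < A} \<union> {s \<in> H. A \<le> s \<and> s < t}"
    using assms by auto
  moreover have "finite {s \<in> H. A \<le> s \<and> s < t}"
    using finite_below[of t] by (rule finite_subset[rotated]) auto
  moreover have "{s \<in> H. s < A} \<inter> {s \<in> H. A \<le> s \<and> s < t} = {}"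
    by auto
  ultimately show ?thesis
    unfolding rank_def using finite_below[of A] by (simp add: card_Un_disjoint)
qed

lemma map_rank_enumeration:
  assumes "A \<le> B" and sorted: "sorted_wrt (<) ts" and ts: "set ts = {s \<in> H. A \<le> s \<and> s < B}"
  shows "map rank ts = [rank A..<rank B]"
proof (rule nth_equalityI)
  have "distinct ts" using sorted by (simp add: strict_sorted_iff)
  then have "card {s \<in> H. A \<le> s \<and> s < B} = length ts"
    unfolding ts[symmetric] by (rule distinct_card)
  then show len: "length (map rank ts) = length [rank A..<rank B]"
    using rank_add_card[OF \<open>A \<le> B\<close>] by simp
  fix i assume "i < length (map rank ts)"
  then have i: "i < length ts" by simp
  have "ts ! i \<in> {s \<in> H. A \<le> s \<and> s < B}" using nth_mem[OF i] unfolding ts .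
  then have "A \<le> ts ! i" by simp
  have "{s \<in> H. A \<le> s \<and> s < ts ! i} = {s \<in> set ts. s < ts ! i}"
    using \<open>ts ! i \<in> _\<close> unfolding ts by auto
  also have "\<dots> = set (take i ts)"
    using set_take_sorted_wrt_less[OF sorted i] by simp
  finally have "card {s \<in> H. A \<le> s \<and> s < ts ! i} = i"
    using \<open>distinct ts\<close> i by (simp add: distinct_card)
  then have "rank (ts ! i) = rank A + i"
    using rank_add_card[OF \<open>A \<le> ts ! i\<close>] by simp
  then show "map rank ts ! i = [rank A..<rank B] ! i"
    using i len by simp
qed

end

lemma occ_eq_enumeration:
  assumes mono: "strict_mono g" and occurrences: "{p. u p = x} = range g"
  shows "occ u x j = g j"
  unfolding occ_def
proof (rule the_equality)
  have "{q. q < g i \<and> u q = x} = g ` {..<i}" for i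
  proof (intro equalityI subsetI)
    fix q assume q: "q \<in> {q. q < g i \<and> u q = x}"
    then obtain l where "q = g l" using occurrences by blast
    with q show "q \<in> g ` {..<i}" using strict_mono_less[OF mono] by auto
  next
    fix q assume "q \<in> g ` {..<i}"
    then obtain l where "l < i" "q = g l" by auto
    moreover have "u (g l) = x" using occurrences by blast
    ultimately show "q \<in> {q. q < g i \<and> u q = x}" using strict_mono_less[OF mono] by simp
  qed
  then have card: "card {q. q < g i \<and> u q = x} = i" for i
    using strict_mono_imp_inj_on[OF mono] by (simp add: card_image)
  have "u (g j) = x" using occurrences by blast
  with card show "u (g j) = x \<and> card {q. q < g j \<and> u q = x} = j" by simp
  fix p assume p: "u p = x \<and> card {q. q < p \<and> u q = x} = j"
  then obtain i where "p = g i" using occurrences by blast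
  with p card show "p = g j" by simp
qed

lemma return_word_eq_enumeration:
  assumes "strict_mono g" "{p. u p = x} = range g"
  shows "return_word u x (Suc j) = map u [g j..<g (Suc j)]"
  unfolding return_word_def using occ_eq_enumeration[OF assms] by simp

lemma finite_hit_times_below:
  assumes "fst \<theta> \<noteq> 0" "fst (snd \<theta>) \<noteq> 0" "snd (snd \<theta>) \<noteq> 0"
  shows "finite {s \<in> hit_times \<theta> m. s < T}"
proof -
  have "{s \<in> hit_times \<theta> m. s < T} \<subseteq>
      {t. 0 \<le> t \<and> t < T \<and> fst m + t * fst \<theta> \<in> \<int>} \<union>
      {t. 0 \<le> t \<and> t < T \<and> fst (snd m) + t * fst (snd \<theta>) \<in> \<int>} \<union>
      {t. 0 \<le> t \<and> t < T \<and> snd (snd m) + t * snd (snd \<theta>) \<in> \<int>}"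
    unfolding hit_times_def coordX_def coordY_def coordZ_def by auto
  then show ?thesis
    using assms by (auto intro: finite_subset finite_crossing_times)
qed

locale billiard_orbit = discrete_time_set "hit_times \<theta> m" for \<theta> m
begin

lemma billiard_word_rank:
  "t \<in> hit_times \<theta> m \<Longrightarrow> billiard_word \<theta> m (rank t) = letter_at \<theta> m t"
  unfolding billiard_word_def nth_hit_def rank_def[symmetric] by (simp add: the_rank_eq)

lemma letter_positions:
  "{p. billiard_word \<theta> m p = x} = rank ` {t \<in> hit_times \<theta> m. letter_at \<theta> m t = x}"
proof (intro equalityI subsetI)
  fix p assume "p \<in> {p. billiard_word \<theta> m p = x}"
  moreover obtain t where "t \<in> hit_times \<theta> m" "rank t = p" using rank_surj by blast
  ultimately show "p \<in> rank ` {t \<in> hit_times \<theta> m. letter_at \<theta> m t = x}"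
    using billiard_word_rank by auto
qed (auto simp: billiard_word_rank)

lemma billiard_word_segment:
  assumes "A \<le> B" "sorted_wrt (<) ts" "set ts = {s \<in> hit_times \<theta> m. A \<le> s \<and> s < B}"
  shows "map (billiard_word \<theta> m) [rank A..<rank B] = map (letter_at \<theta> m) ts"
proof -
  have "map (billiard_word \<theta> m) [rank A..<rank B] = map (\<lambda>t. billiard_word \<theta> m (rank t)) ts"
    unfolding map_rank_enumeration[OF assms, symmetric] by simp
  also have "\<dots> = map (letter_at \<theta> m) ts"
    using assms(3) billiard_word_rank by (intro map_cong) auto
  finally show ?thesis .
qed

end

definition orbit_congruent ::
    "real \<times> real \<times> real \<Rightarrow> real \<times> real \<times> real \<Rightarrow> real \<Rightarrow> real \<times> real \<times> real \<Rightarrow> bool" where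
  "orbit_congruent \<theta> m A m' \<longleftrightarrow>
     coordX \<theta> m A - fst m' \<in> \<int> \<and> coordY \<theta> m A - fst (snd m') \<in> \<int> \<and>
     coordZ \<theta> m A - snd (snd m') \<in> \<int>"

lemma orbit_congruent_coords:
  assumes "orbit_congruent \<theta> m A m'"
  shows "coordX \<theta> m (A + t) \<in> \<int> \<longleftrightarrow> coordX \<theta> m' t \<in> \<int>"
    and "coordY \<theta> m (A + t) \<in> \<int> \<longleftrightarrow> coordY \<theta> m' t \<in> \<int>"
    and "coordZ \<theta> m (A + t) \<in> \<int> \<longleftrightarrow> coordZ \<theta> m' t \<in> \<int>"
proof -
  have "coordX \<theta> m (A + t) = (coordX \<theta> m A - fst m') + coordX \<theta> m' t"
    "coordY \<theta> m (A + t) = (coordY \<theta> m A - fst (snd m')) + coordY \<theta> m' t"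
    "coordZ \<theta> m (A + t) = (coordZ \<theta> m A - snd (snd m')) + coordZ \<theta> m' t"
    unfolding coordX_def coordY_def coordZ_def by (simp_all add: algebra_simps)
  then show "coordX \<theta> m (A + t) \<in> \<int> \<longleftrightarrow> coordX \<theta> m' t \<in> \<int>"
    and "coordY \<theta> m (A + t) \<in> \<int> \<longleftrightarrow> coordY \<theta> m' t \<in> \<int>"
    and "coordZ \<theta> m (A + t) \<in> \<int> \<longleftrightarrow> coordZ \<theta> m' t \<in> \<int>"
    using assms unfolding orbit_congruent_def by (simp_all add: Ints_add_left_iff)
qed

lemma letter_at_congruent:
  "orbit_congruent \<theta> m A m' \<Longrightarrow> letter_at \<theta> m (A + t) = letter_at \<theta> m' t"
  unfolding letter_at_def by (simp add: orbit_congruent_coords)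

lemma hit_times_window_congruent:
  assumes "orbit_congruent \<theta> m A m'" "0 \<le> A"
  shows "{s \<in> hit_times \<theta> m. A \<le> s \<and> s < A + T} = (+) A ` {t \<in> hit_times \<theta> m'. t < T}"
proof -
  have shift: "A + t \<in> hit_times \<theta> m \<longleftrightarrow> t \<in> hit_times \<theta> m'" if "0 \<le> t" for t
    using assms that unfolding hit_times_def by (simp add: orbit_congruent_coords)
  show ?thesis
  proof (intro equalityI subsetI)
    fix s assume "s \<in> {s \<in> hit_times \<theta> m. A \<le> s \<and> s < A + T}"
    then have "s - A \<in> {t \<in> hit_times \<theta> m'. t < T}" using shift[of "s - A"] by simp
    then show "s \<in> (+) A ` {t \<in> hit_times \<theta> m'. t < T}" by (rule image_eqI[rotated]) simp
  next
    fix s assume "s \<in> (+) A ` {t \<in> hit_times \<theta> m'. t < T}"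
    then obtain t where "t \<in> hit_times \<theta> m'" "t < T" "s = A + t" by auto
    moreover have "0 \<le> t" using \<open>t \<in> hit_times \<theta> m'\<close> unfolding hit_times_def by simp
    ultimately show "s \<in> {s \<in> hit_times \<theta> m. A \<le> s \<and> s < A + T}" using shift by simp
  qed
qed

lemma well_defined_orbit_congruent:
  assumes "orbit_congruent \<theta> m A m'" "0 \<le> A" "well_defined_orbit \<theta> m"
  shows "well_defined_orbit \<theta> m'"
  unfolding well_defined_orbit_def
proof (intro allI impI)
  fix t :: real assume "0 \<le> t"
  with assms(2,3) have "\<not> (coordX \<theta> m (A + t) \<in> \<int> \<and> coordY \<theta> m (A + t) \<in> \<int>) \<and>
      \<not> (coordX \<theta> m (A + t) \<in> \<int> \<and> coordZ \<theta> m (A + t) \<in> \<int>) \<and>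
      \<not> (coordY \<theta> m (A + t) \<in> \<int> \<and> coordZ \<theta> m (A + t) \<in> \<int>)"
    unfolding well_defined_orbit_def by simp
  then show "\<not> (coordX \<theta> m' t \<in> \<int> \<and> coordY \<theta> m' t \<in> \<int>) \<and>
      \<not> (coordX \<theta> m' t \<in> \<int> \<and> coordZ \<theta> m' t \<in> \<int>) \<and>
      \<not> (coordY \<theta> m' t \<in> \<int> \<and> coordZ \<theta> m' t \<in> \<int>)"
    unfolding orbit_congruent_coords[OF assms(1)] .
qed

section \<open>Orbits of the face X = 0 in direction theta0\<close>

lemma coords_theta0_face:
  "coordX theta0 (0, y, z) t = t / 2"
  "coordY theta0 (0, y, z) t = y + t * theta2"
  "coordZ theta0 (0, y, z) t = z + t * theta3"
  unfolding coordX_def coordY_def coordZ_def theta0_def theta1_def by simp_all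

lemma even_in_hit_times_face: "2 * real j \<in> hit_times theta0 (0, y, z)"
  unfolding hit_times_def coords_theta0_face by simp

lemma billiard_orbit_theta0_face: "billiard_orbit theta0 (0, y, z)"
proof
  show "finite {s \<in> hit_times theta0 (0, y, z). s < T}" for T
    using phi_bounds
    by (intro finite_hit_times_below) (simp_all add: theta0_def theta1_def theta2_def theta3_def)
  show "\<exists>s \<in> hit_times theta0 (0, y, z). T < s" for T
  proof
    show "T < 2 * real (nat \<lceil>T\<rceil> + 1)" using real_nat_ceiling_ge[of T] by simp
  qed (rule even_in_hit_times_face)
qed

interpretation face: billiard_orbit theta0 "(0, y, z)" for y z
  by (rule billiard_orbit_theta0_face)

lemma return_word_a_face_segment:
  "return_word (billiard_word theta0 (0, y, z)) a (Suc k) =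
     map (billiard_word theta0 (0, y, z)) [face.rank y z (2 * real k)..<face.rank y z (2 * real k + 2)]"
proof -
  have letter_a: "letter_at theta0 (0, y, z) t = a \<longleftrightarrow> t / 2 \<in> \<int>" for t
    unfolding letter_at_def coords_theta0_face by simp
  have "{t \<in> hit_times theta0 (0, y, z). letter_at theta0 (0, y, z) t = a} = range (\<lambda>j. 2 * real j)"
  proof (intro equalityI subsetI)
    fix t assume "t \<in> {t \<in> hit_times theta0 (0, y, z). letter_at theta0 (0, y, z) t = a}"
    then have "0 \<le> t" "t / 2 \<in> \<int>" unfolding letter_a hit_times_def by auto
    then obtain n :: int where "t / 2 = n" by (auto elim: Ints_cases)
    with \<open>0 \<le> t\<close> have "t = 2 * real (nat n)" by simp
    then show "t \<in> range (\<lambda>j. 2 * real j)" by blast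
  qed (auto simp: letter_a even_in_hit_times_face)
  then have "{p. billiard_word theta0 (0, y, z) p = a} = range (\<lambda>j. face.rank y z (2 * real j))"
    unfolding face.letter_positions by (simp add: image_image)
  moreover have "strict_mono (\<lambda>j. face.rank y z (2 * real j))"
    by (intro strict_monoI face.rank_less even_in_hit_times_face) simp
  ultimately show ?thesis
    by (simp add: return_word_eq_enumeration algebra_simps)
qed

lemma orbit_congruent_theta0_face:
  "orbit_congruent theta0 (0, y, z) (2 * real k)
     (0, frac (y + 2 * real k * theta2), frac (z - 2 * real k * theta2))"
proof -
  have theta3: "theta3 = 1 - theta2" using theta2_plus_theta3 by simp
  have "z + 2 * real k * theta3 - frac (z - 2 * real k * theta2) =
      of_int (\<lfloor>z - 2 * real k * theta2\<rfloor> + 2 * int k)"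
    unfolding frac_def theta3 by (simp add: algebra_simps)
  moreover have "y + 2 * real k * theta2 - frac (y + 2 * real k * theta2) =
      of_int \<lfloor>y + 2 * real k * theta2\<rfloor>"
    unfolding frac_def by simp
  ultimately show ?thesis
    unfolding orbit_congruent_def coords_theta0_face by simp
qed

section \<open>The first return to the face\<close>

lemma coords_at_crossing_times_face:
  "coordX theta0 (0, y, z) 2 = 1"
  "coordY theta0 (0, y, z) ((n - y) * phi) = n"
  "coordZ theta0 (0, y, z) ((1 - z) * phi^2) = 1"
  using phi_bounds unfolding coords_theta0_face theta2_def theta3_def by simp_all

lemma initial_window_hit_time_cases:
  assumes "0 \<le> y" "y < 1" "0 \<le> z" "z < 1"
    and "t \<in> hit_times theta0 (0, y, z)" "t < 2"
  shows "t = 0 \<or> t = (1 - y) * phi \<or> t = (2 - y) * phi \<or> t = (1 - z) * phi^2"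
proof -
  have t: "0 \<le> t" "t < 2" and "t / 2 \<in> \<int> \<or> y + t / phi \<in> \<int> \<or> z + t / phi^2 \<in> \<int>"
    using assms(5,6) unfolding hit_times_def coords_theta0_face theta2_def theta3_def by auto
  then consider "t / 2 \<in> \<int>" | "y + t / phi \<in> \<int>" | "z + t / phi^2 \<in> \<int>" by blast
  then show ?thesis
  proof cases
    case 1
    then show ?thesis using Ints_nonneg_less_one[of "t / 2"] t by simp
  next
    case 2
    have "t < real 2 * phi" using t phi_bounds by simp
    from crossing_time_bounded[OF assms(1,2) _ t(1) this 2] phi_bounds
    show ?thesis by (auto simp: le_Suc_eq numeral_2_eq_2)
  next
    case 3
    have "t < real 1 * phi^2" using t phi_bounds phi_squared by simp
    from crossing_time_bounded[OF assms(3,4) _ t(1) this 3] phi_bounds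
    show ?thesis by auto
  qed
qed

lemma initial_window_hit_times:
  assumes "0 \<le> y" "y < 1" "0 \<le> z" "z < 1"
  shows "{t \<in> hit_times theta0 (0, y, z). t < 2} =
    {0, (1 - y) * phi} \<union> {t \<in> {(2 - y) * phi, (1 - z) * phi^2}. t < 2}"
proof (intro equalityI subsetI)
  fix t assume "t \<in> {t \<in> hit_times theta0 (0, y, z). t < 2}"
  with initial_window_hit_time_cases[OF assms]
  show "t \<in> {0, (1 - y) * phi} \<union> {t \<in> {(2 - y) * phi, (1 - z) * phi^2}. t < 2}"
    by auto
next
  fix t assume t: "t \<in> {0, (1 - y) * phi} \<union> {t \<in> {(2 - y) * phi, (1 - z) * phi^2}. t < 2}"
  have "(1 - y) * phi \<le> 1 * phi"
    using assms phi_bounds by (intro mult_right_mono) simp_all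
  then have "(1 - y) * phi < 2" using phi_bounds by linarith
  moreover have "0 \<le> (1 - y) * phi" "0 \<le> (2 - y) * phi" "0 \<le> (1 - z) * phi^2"
    using assms phi_bounds by simp_all
  ultimately have "0 \<le> t" "t < 2" using t by auto
  from t consider "t = 0" | "t = (1 - y) * phi" | "t = (2 - y) * phi" | "t = (1 - z) * phi^2"
    by blast
  then have "coordX theta0 (0, y, z) t \<in> \<int> \<or> coordY theta0 (0, y, z) t \<in> \<int> \<or>
      coordZ theta0 (0, y, z) t \<in> \<int>"
    by cases (simp_all add: coords_at_crossing_times_face coords_theta0_face(1))
  with \<open>0 \<le> t\<close> \<open>t < 2\<close> show "t \<in> {t \<in> hit_times theta0 (0, y, z). t < 2}"
    unfolding hit_times_def by blast
qed

lemma initial_window_letters: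
  assumes "0 \<le> y" "y < 1" "0 \<le> z" "z < 1" "well_defined_orbit theta0 (0, y, z)"
    and "t \<in> hit_times theta0 (0, y, z)" "t < 2"
  shows "letter_at theta0 (0, y, z) t = (if t = 0 then a else if t = (1 - z) * phi^2 then c else b)"
proof -
  have "0 \<le> t" using assms(6) unfolding hit_times_def by simp
  then have X: "coordX theta0 (0, y, z) t \<in> \<int> \<longleftrightarrow> t = 0"
    using Ints_nonneg_less_one[of "t / 2"] \<open>t < 2\<close> unfolding coords_theta0_face by auto
  consider "t = 0" | "t \<noteq> 0" "t = (1 - z) * phi^2" | "t \<noteq> 0" "t \<noteq> (1 - z) * phi^2" "t \<in> {(1 - y) * phi, (2 - y) * phi}"
    using initial_window_hit_time_cases[OF assms(1-4,6,7)] by blast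
  then show ?thesis
  proof cases
    case 1
    then show ?thesis unfolding letter_at_def X by simp
  next
    case 2
    then have "coordZ theta0 (0, y, z) t \<in> \<int>" using coords_at_crossing_times_face(3) by simp
    with assms(5) \<open>0 \<le> t\<close> have "coordY theta0 (0, y, z) t \<notin> \<int>"
      unfolding well_defined_orbit_def by blast
    with 2 show ?thesis unfolding letter_at_def X by simp
  next
    case 3
    then have "coordY theta0 (0, y, z) t \<in> \<int>"
      using coords_at_crossing_times_face(2)[where n = 1] coords_at_crossing_times_face(2)[where n = 2]
      by auto
    with 3 show ?thesis unfolding letter_at_def X by simp
  qed
qed

(* Well-definedness keeps (y, z) off the boundaries of the pieces P_{a_i}, where Phi is []. *)
lemma initial_window_crossing_times_distinct:
  assumes "y < 1" "z < 1" "well_defined_orbit theta0 (0, y, z)"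
  shows "(2 - y) * phi \<noteq> 2" "(1 - z) * phi^2 \<noteq> 2"
    "(1 - z) * phi^2 \<noteq> (1 - y) * phi" "(1 - z) * phi^2 \<noteq> (2 - y) * phi"
proof -
  have "0 \<le> (1 - y) * phi" "0 \<le> (2 - y) * phi" "0 \<le> (1 - z) * phi^2"
    using assms phi_bounds by simp_all
  then have "\<not> (coordX theta0 (0, y, z) t \<in> \<int> \<and> coordY theta0 (0, y, z) t \<in> \<int>)"
    "\<not> (coordX theta0 (0, y, z) t \<in> \<int> \<and> coordZ theta0 (0, y, z) t \<in> \<int>)"
    "\<not> (coordY theta0 (0, y, z) t \<in> \<int> \<and> coordZ theta0 (0, y, z) t \<in> \<int>)"
    if "t \<in> {2, (1 - y) * phi, (2 - y) * phi, (1 - z) * phi^2}" for t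
    using assms(3) that unfolding well_defined_orbit_def by auto
  then show "(2 - y) * phi \<noteq> 2" "(1 - z) * phi^2 \<noteq> 2"
    "(1 - z) * phi^2 \<noteq> (1 - y) * phi" "(1 - z) * phi^2 \<noteq> (2 - y) * phi"
    using coords_at_crossing_times_face coords_at_crossing_times_face(2)[where n = 1] coords_at_crossing_times_face(2)[where n = 2]
    by (metis Ints_1 Ints_numeral insertCI)+
qed

lemma less_iff_of_diff_eq_pos_mult:
  fixes u v w x p :: real
  assumes "0 < p" "u - v = p * (w - x)"
  shows "x < w \<longleftrightarrow> v < u" "w < x \<longleftrightarrow> u < v"
proof -
  have "v < u \<longleftrightarrow> 0 < u - v" "u < v \<longleftrightarrow> u - v < 0" by auto
  then show "x < w \<longleftrightarrow> v < u" "w < x \<longleftrightarrow> u < v"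
    using assms by (auto simp: zero_less_mult_iff mult_less_0_iff)
qed

lemma Phi_boundaries_crossing_order:
  shows "y < 4 - 2 * phi \<longleftrightarrow> 2 < (2 - y) * phi"
    and "y > 4 - 2 * phi \<longleftrightarrow> (2 - y) * phi < 2"
    and "z < 2 * phi - 3 \<longleftrightarrow> 2 < (1 - z) * phi^2"
    and "z > 2 * phi - 3 \<longleftrightarrow> (1 - z) * phi^2 < 2"
    and "z < (2 - phi) + y / phi \<longleftrightarrow> (1 - y) * phi < (1 - z) * phi^2"
    and "z > (2 - phi) + y / phi \<longleftrightarrow> (1 - z) * phi^2 < (1 - y) * phi"
    and "z < (3 - 2 * phi) + y / phi \<longleftrightarrow> (2 - y) * phi < (1 - z) * phi^2"
    and "z > (3 - 2 * phi) + y / phi \<longleftrightarrow> (1 - z) * phi^2 < (2 - y) * phi"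
proof -
  have pos: "0 < phi" "0 < phi^2" using phi_bounds by simp_all
  have y_div: "y / phi = y * (phi - 1)" using inverse_phi by (simp add: divide_inverse)
  have "(2 - y) * phi - 2 = phi * ((4 - 2 * phi) - y)"
    using phi_squared by (simp add: algebra_simps power2_eq_square)
  then show "y < 4 - 2 * phi \<longleftrightarrow> 2 < (2 - y) * phi" "y > 4 - 2 * phi \<longleftrightarrow> (2 - y) * phi < 2"
    using less_iff_of_diff_eq_pos_mult[OF pos(1)] by blast+
  have "(1 - z) * phi^2 - 2 = phi^2 * ((2 * phi - 3) - z)"
    using phi_squared by (simp add: algebra_simps power2_eq_square)
  then show "z < 2 * phi - 3 \<longleftrightarrow> 2 < (1 - z) * phi^2" "z > 2 * phi - 3 \<longleftrightarrow> (1 - z) * phi^2 < 2"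
    using less_iff_of_diff_eq_pos_mult[OF pos(2)] by blast+
  have "(1 - z) * phi^2 - (1 - y) * phi = phi^2 * ((2 - phi) + y / phi - z)"
    unfolding y_div using phi_squared by algebra
  then show "z < (2 - phi) + y / phi \<longleftrightarrow> (1 - y) * phi < (1 - z) * phi^2"
    "z > (2 - phi) + y / phi \<longleftrightarrow> (1 - z) * phi^2 < (1 - y) * phi"
    using less_iff_of_diff_eq_pos_mult[OF pos(2)] by blast+
  have "(1 - z) * phi^2 - (2 - y) * phi = phi^2 * ((3 - 2 * phi) + y / phi - z)"
    unfolding y_div using phi_squared by algebra
  then show "z < (3 - 2 * phi) + y / phi \<longleftrightarrow> (2 - y) * phi < (1 - z) * phi^2"
    "z > (3 - 2 * phi) + y / phi \<longleftrightarrow> (1 - z) * phi^2 < (2 - y) * phi"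
    using less_iff_of_diff_eq_pos_mult[OF pos(2)] by blast+
qed

lemma crossing_order_cases:
  fixes t1 t2 t3 :: real
  assumes "t2 \<noteq> 2" "t3 \<noteq> 2" "t3 \<noteq> t1" "t3 \<noteq> t2" "t1 < 2" "t1 < t2"
  obtains "2 < t2" "2 < t3" | "t2 < 2" "2 < t3" | "2 < t2" "t3 < 2" "t1 < t3"
    | "2 < t2" "t3 < t1" | "t2 < 2" "t3 < 2" "t2 < t3" | "t2 < 2" "t1 < t3" "t3 < t2"
    | "t2 < 2" "t3 < t1"
proof -
  have "t2 < 2 \<or> 2 < t2" "t3 < 2 \<or> 2 < t3" "t3 < t1 \<or> t1 < t3" "t3 < t2 \<or> t2 < t3"
    using assms(1-4) by (simp_all add: neq_iff)
  then show thesis using assms(5,6) that by (elim disjE) linarith+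
qed

lemma initial_window_word:
  assumes "0 \<le> y" "y < 1" "0 \<le> z" "z < 1" "well_defined_orbit theta0 (0, y, z)"
  obtains ts where "sorted_wrt (<) ts" "set ts = {t \<in> hit_times theta0 (0, y, z). t < 2}"
    "map (letter_at theta0 (0, y, z)) ts = Phi y z"
proof -
  define t1 t2 t3 where "t1 = (1 - y) * phi" and "t2 = (2 - y) * phi" and "t3 = (1 - z) * phi^2"
  have "(1 - y) * phi \<le> 1 * phi"
    using assms phi_bounds by (intro mult_right_mono) simp_all
  then have "t1 < 2" using phi_bounds unfolding t1_def by linarith
  moreover have "0 < t1" "t1 < t2"
    using assms phi_bounds unfolding t1_def t2_def by (simp_all add: algebra_simps)
  ultimately have t1: "0 < t1" "t1 < 2" "t1 < t2" by simp_all
  have t3: "0 < t3" using assms phi_bounds unfolding t3_def by simp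
  have generic: "t2 \<noteq> 2" "t3 \<noteq> 2" "t3 \<noteq> t1" "t3 \<noteq> t2"
    using initial_window_crossing_times_distinct[OF assms(2,4,5)] unfolding t1_def t2_def t3_def by simp_all
  have Phi: "Phi y z =
    (if 2 < t2 \<and> 2 < t3 then [a, b]
     else if t2 < 2 \<and> 2 < t3 then [a, b, b]
     else if 2 < t2 \<and> t3 < 2 \<and> t1 < t3 then [a, b, c]
     else if 2 < t2 \<and> t3 < t1 then [a, c, b]
     else if t2 < 2 \<and> t3 < 2 \<and> t2 < t3 then [a, b, b, c]
     else if t2 < 2 \<and> t1 < t3 \<and> t3 < t2 then [a, b, c, b]
     else if t2 < 2 \<and> t3 < t1 then [a, c, b, b]
     else [])"
    unfolding Phi_def Phi_boundaries_crossing_order t1_def t2_def t3_def by simp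
  let ?label = "\<lambda>t. if t = 0 then a else if t = t3 then c else b"
  obtain ts where ts: "sorted_wrt (<) ts" "set ts = {0, t1} \<union> {t \<in> {t2, t3}. t < 2}"
    "map ?label ts = Phi y z"
    using generic t1(2,3)
  proof (cases rule: crossing_order_cases)
    case 1
    then show thesis using t1 t3 generic by (intro that[of "[0, t1]"]) (auto simp: Phi)
  next
    case 2
    then show thesis using t1 t3 generic by (intro that[of "[0, t1, t2]"]) (auto simp: Phi)
  next
    case 3
    then show thesis using t1 t3 generic by (intro that[of "[0, t1, t3]"]) (auto simp: Phi)
  next
    case 4
    then show thesis using t1 t3 generic by (intro that[of "[0, t3, t1]"]) (auto simp: Phi)
  next
    case 5
    then show thesis using t1 t3 generic by (intro that[of "[0, t1, t2, t3]"]) (auto simp: Phi)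
  next
    case 6
    then show thesis using t1 t3 generic by (intro that[of "[0, t1, t3, t2]"]) (auto simp: Phi)
  next
    case 7
    then show thesis using t1 t3 generic by (intro that[of "[0, t3, t1, t2]"]) (auto simp: Phi)
  qed
  have window: "{t \<in> hit_times theta0 (0, y, z). t < 2} = {0, t1} \<union> {t \<in> {t2, t3}. t < 2}"
    unfolding t1_def t2_def t3_def by (rule initial_window_hit_times[OF assms(1-4)])
  have "letter_at theta0 (0, y, z) t = ?label t" if "t \<in> set ts" for t
  proof -
    have "t \<in> hit_times theta0 (0, y, z)" "t < 2" using that ts(2) unfolding window[symmetric] by auto
    then show ?thesis unfolding t3_def by (rule initial_window_letters[OF assms])
  qed
  then have "map (letter_at theta0 (0, y, z)) ts = map ?label ts" by (rule map_cong[OF refl])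
  with ts show thesis unfolding window[symmetric] by (intro that) simp_all
qed

theorem lemma5:
  fixes y z :: real and k :: nat
  assumes "0 \<le> y" "y < 1" "0 \<le> z" "z < 1"
    and "well_defined_orbit theta0 (0, y, z)"
  shows "return_word (billiard_word theta0 (0, y, z)) a (k + 1) =
         Phi (frac (y + 2 * real k * theta2)) (frac (z - 2 * real k * theta2))"
proof -
  define A where "A = 2 * real k"
  define y' z' where "y' = frac (y + A * theta2)" and "z' = frac (z - A * theta2)"
  have congruent: "orbit_congruent theta0 (0, y, z) A (0, y', z')"
    unfolding A_def y'_def z'_def by (rule orbit_congruent_theta0_face)
  have "0 \<le> A" unfolding A_def by simp
  then have "well_defined_orbit theta0 (0, y', z')"
    using well_defined_orbit_congruent[OF congruent _ assms(5)] by blast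
  then obtain ts where ts: "sorted_wrt (<) ts" "set ts = {t \<in> hit_times theta0 (0, y', z'). t < 2}"
      "map (letter_at theta0 (0, y', z')) ts = Phi y' z'"
    using initial_window_word[of y' z'] unfolding y'_def z'_def by (auto simp: frac_lt_1)
  have window: "set (map ((+) A) ts) = {s \<in> hit_times theta0 (0, y, z). A \<le> s \<and> s < A + 2}"
    using hit_times_window_congruent[OF congruent \<open>0 \<le> A\<close>] ts(2) by simp
  have "return_word (billiard_word theta0 (0, y, z)) a (k + 1) =
      map (billiard_word theta0 (0, y, z)) [face.rank y z A..<face.rank y z (A + 2)]"
    unfolding A_def using return_word_a_face_segment by simp
  also have "\<dots> = map (letter_at theta0 (0, y, z)) (map ((+) A) ts)"
    using ts(1) window by (intro face.billiard_word_segment) (simp_all add: sorted_wrt_map)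
  also have "\<dots> = Phi y' z'"
    using ts(3) letter_at_congruent[OF congruent] by (simp add: comp_def)
  finally show ?thesis unfolding y'_def z'_def A_def .
qed

end
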